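(* There is a constant $c$ such that for every $\ell\in\mathbb N$ and every finite alphabet $\Gamma_2$ disjoint from $\Gamma_1=\{0,1,\mathsf{inc},\mathsf{dec}\}$, there are $\ell$ DFAs $A_1,\dots,A_\ell$ over $\Gamma_1\cup\Gamma_2$, each with at most $c\cdot\ell$ states, such that $L'_\ell=\bigcap_{i=1}^{\ell}L(A_i)$.
   Context: For a word $b_1b_2\cdots b_\ell\in\{0,1\}^\ell$ let $\mathsf{val}(b_1\cdots b_\ell)=\sum_i b_i 2^{\ell-i}$. Interpret $\mathsf{inc}(n)=n+1$, $\mathsf{dec}(n)=n-1$ and $a(n)=n$ for $a\in\Gamma_2$. Then $L'_\ell$ is the set of words $n_0o_1n_1o_2n_2\cdots o_kn_k$ with $k\ge 0$, each $n_i\in\{0,1\}^\ell$, each $o_i\in\{\mathsf{inc},\mathsf{dec}\}\cup\Gamma_2$, such that $\mathsf{val}(n_i)=o_i(\mathsf{val}(n_{i-1}))$ for all $0<i\le k$, $n_0=0^\ell=n_k$, if $o_i=\mathsf{inc}$ then $n_{i-1}\neq 1^\ell$, and if $o_i=\mathsf{dec}$ then $n_{i-1}\ne 0^\ell$. *)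

theory Defs
  imports Main
begin

text \<open>Alphabet Gamma_1 \<union> Gamma_2: the constructors Zero, One, Inc, Dec form Gamma_1;
  letters of Gamma_2 are tagged by Sym, so Gamma_2 is disjoint from Gamma_1 by construction.
  A finite alphabet Gamma_2 is represented (up to renaming) by a finite set of naturals.\<close>
datatype sym = Zero | One | Inc | Dec | Sym nat

definition Gamma1 :: "sym set" where
  "Gamma1 = {Zero, One, Inc, Dec}"

definition Sigma :: "nat set \<Rightarrow> sym set" where
  "Sigma G2 = Gamma1 \<union> Sym ` G2"

record dfa =
  states :: "nat set"
  init   :: nat
  trans  :: "nat \<Rightarrow> sym \<Rightarrow> nat"
  final  :: "nat set"

definition is_dfa :: "sym set \<Rightarrow> dfa \<Rightarrow> bool" where
  "is_dfa \<Sigma> A \<longleftrightarrow> finite (states A) \<and> init A \<in> states A \<and> final A \<subseteq> states A \<and>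
     (\<forall>q\<in>states A. \<forall>a\<in>\<Sigma>. trans A q a \<in> states A)"

definition run :: "dfa \<Rightarrow> nat \<Rightarrow> sym list \<Rightarrow> nat" where
  "run A q w = foldl (trans A) q w"

definition lang :: "sym set \<Rightarrow> dfa \<Rightarrow> sym list set" where
  "lang \<Sigma> A = {w \<in> lists \<Sigma>. run A (init A) w \<in> final A}"

definition bval :: "bool list \<Rightarrow> nat" where
  "bval bs = (\<Sum>i<length bs. (if bs ! i then 2 ^ (length bs - 1 - i) else 0))"

definition bits :: "bool list \<Rightarrow> sym list" where
  "bits bs = map (\<lambda>b. if b then One else Zero) bs"

definition opval :: "sym \<Rightarrow> nat \<Rightarrow> nat" where
  "opval o' v = (case o' of Inc \<Rightarrow> v + 1 | Dec \<Rightarrow> v - 1 | _ \<Rightarrow> v)"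

text \<open>The word n_0 o_1 n_1 ... o_k n_k, with ns = [n_0,...,n_k], os = [o_1,...,o_k].\<close>
definition enc :: "bool list list \<Rightarrow> sym list \<Rightarrow> sym list" where
  "enc ns os = bits (ns ! 0) @ concat (map (\<lambda>i. (os ! i) # bits (ns ! (Suc i))) [0..<length os])"

definition Lprime :: "nat \<Rightarrow> nat set \<Rightarrow> sym list set" where
  "Lprime l G2 = {enc ns os | ns os.
      length ns = Suc (length os) \<and>
      (\<forall>n\<in>set ns. length n = l) \<and>
      (\<forall>o'\<in>set os. o' \<in> {Inc, Dec} \<union> Sym ` G2) \<and>
      ns ! 0 = replicate l False \<and> ns ! length os = replicate l False \<and>
      (\<forall>i<length os.
         bval (ns ! Suc i) = opval (os ! i) (bval (ns ! i)) \<and>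
         (os ! i = Inc \<longrightarrow> ns ! i \<noteq> replicate l True) \<and>
         (os ! i = Dec \<longrightarrow> ns ! i \<noteq> replicate l False))}"

end

theory Submission
  imports Defs "HOL-Library.Countable"
begin

(* Fix a bit position k, bit 0 being the most significant one. Adding 1 to an l-bit number flips
   bit k exactly when all less significant bits are 1, and subtracting 1 flips it exactly when they
   are all 0. So an automaton reading n_0 o_1 n_1 ... o_m n_m can check bit k of every n_i with
   O(l) states: besides the position inside the current number and the value bit k must have there,
   it records whether the bits after position k are all 1 resp. all 0, and whether the whole number
   is 1^l resp. 0^l (where inc resp. dec is forbidden). For numbers of equal length, m = n + 1 iff
   every bit of m is the one predicted in this way, so a word is accepted by the automata for all
   k < l iff it lies in L'_l. The alphabet Gamma_2 only enters the transitions. *)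

section \<open>Binary counters\<close>

lemma eq_replicate_iff: "length xs = n \<Longrightarrow> xs = replicate n x \<longleftrightarrow> (\<forall>y\<in>set xs. y = x)"
  by (metis in_set_replicate replicate_eqI)

lemma set_butlast_last: "xs \<noteq> [] \<Longrightarrow> set xs = insert (last xs) (set (butlast xs))"
  by (induction xs) auto

lemma double_add_of_bool_eq_iff:
  "2 * x + of_bool a = 2 * y + of_bool b \<longleftrightarrow> x = y \<and> a = b" for x y :: nat
  by (cases a; cases b; simp; presburger)

lemma bval_Nil [simp]: "bval [] = 0"
  by (simp add: bval_def)

lemma bval_snoc [simp]: "bval (bs @ [b]) = 2 * bval bs + of_bool b"
proof -
  have "(2::nat) ^ (length bs - i) = 2 * 2 ^ (length bs - 1 - i)" if "i < length bs" for i
    using that by (simp flip: power_Suc add: Suc_diff_Suc)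
  then show ?thesis
    unfolding bval_def by (auto simp: nth_append sum_distrib_left intro!: sum.cong)
qed

lemma bval_eq_iff: "length xs = length ys \<Longrightarrow> bval xs = bval ys \<longleftrightarrow> xs = ys"
  by (induction xs ys rule: rev_induct2) (auto simp: double_add_of_bool_eq_iff)

lemma bval_eq_0_iff: "bval bs = 0 \<longleftrightarrow> True \<notin> set bs"
  by (induction bs rule: rev_induct) auto

lemma bval_map_Not: "bval (map Not bs) + bval bs + 1 = 2 ^ length bs"
  by (induction bs rule: rev_induct) auto

text \<open>\<open>carry True n k\<close> (resp. \<open>carry False n k\<close>): adding (resp. subtracting) 1 propagates a
  carry (resp. borrow) into bit \<open>k\<close>, i.e. all less significant bits, which are those with larger
  index, are 1 (resp. 0).\<close>

definition carry :: "bool \<Rightarrow> bool list \<Rightarrow> nat \<Rightarrow> bool" where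
  "carry b n k \<longleftrightarrow> (\<forall>x\<in>set (drop (Suc k) n). x = b)"

lemma carry_snoc [simp]:
  "carry b (n @ [a]) k \<longleftrightarrow> (if k < length n then carry b n k \<and> a = b else True)"
  by (auto simp: carry_def)

lemma bval_eq_Suc_iff:
  "length m = length n \<Longrightarrow>
    bval m = Suc (bval n) \<longleftrightarrow> False \<in> set n \<and> (\<forall>k<length n. m ! k = (n ! k \<noteq> carry True n k))"
proof (induction m n rule: rev_induct2)
  case (4 b m a n)
  then have "length m = length n"
    by simp
  have "Suc (bval (n @ [a])) = 2 * (bval n + of_bool a) + of_bool (\<not> a)"
    by (cases a) simp_all
  then have "bval (m @ [b]) = Suc (bval (n @ [a])) \<longleftrightarrow> bval m = bval n + of_bool a \<and> b = (\<not> a)"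
    by (simp only: bval_snoc double_add_of_bool_eq_iff)
  with 4 \<open>length m = length n\<close> bval_eq_iff[of m n] show ?case
    by (cases a; simp add: All_less_Suc nth_append list_eq_iff_nth_eq; blast)
qed simp_all

lemma Suc_bval_eq_iff:
  assumes "length m = length n"
  shows "Suc (bval m) = bval n \<longleftrightarrow> True \<in> set n \<and> (\<forall>k<length n. m ! k = (n ! k \<noteq> carry False n k))"
proof -
  \<comment> \<open>Complementing all bits turns a decrement into an increment.\<close>
  have "bval (map Not m) + bval m = bval (map Not n) + bval n"
    using bval_map_Not[of m] bval_map_Not[of n] assms by simp
  then have "Suc (bval m) = bval n \<longleftrightarrow> bval (map Not m) = Suc (bval (map Not n))"
    by presburger
  also have "\<dots> \<longleftrightarrow> True \<in> set n \<and> (\<forall>k<length n. m ! k = (n ! k \<noteq> carry False n k))"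
    using assms by (subst bval_eq_Suc_iff) (auto simp: carry_def drop_map)
  finally show ?thesis .
qed

definition Ops :: "nat set \<Rightarrow> sym set" where
  "Ops G = {Inc, Dec} \<union> Sym ` G"

definition op_enabled :: "sym \<Rightarrow> bool list \<Rightarrow> bool" where
  "op_enabled a n = (case a of Inc \<Rightarrow> False \<in> set n | Dec \<Rightarrow> True \<in> set n | _ \<Rightarrow> True)"

definition next_bit :: "sym \<Rightarrow> bool list \<Rightarrow> nat \<Rightarrow> bool" where
  "next_bit a n k =
    (case a of Inc \<Rightarrow> n ! k \<noteq> carry True n k | Dec \<Rightarrow> n ! k \<noteq> carry False n k | _ \<Rightarrow> n ! k)"

lemma op_step_iff:
  assumes "length n = l" "length m = l"
  shows "op_enabled a n \<and> (\<forall>k<l. m ! k = next_bit a n k) \<longleftrightarrow>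
    bval m = opval a (bval n) \<and>
    (a = Inc \<longrightarrow> n \<noteq> replicate l True) \<and> (a = Dec \<longrightarrow> n \<noteq> replicate l False)"
proof (cases a)
  case Inc
  then show ?thesis
    using bval_eq_Suc_iff[of m n] assms
    by (auto simp: op_enabled_def next_bit_def opval_def eq_replicate_iff)
next
  case Dec
  have "True \<in> set n \<Longrightarrow> bval n \<noteq> 0"
    by (simp add: bval_eq_0_iff)
  with Dec show ?thesis
    using Suc_bval_eq_iff[of m n] assms
    by (auto simp: op_enabled_def next_bit_def opval_def eq_replicate_iff)
qed (use bval_eq_iff[of m n] assms in
      \<open>auto simp: op_enabled_def next_bit_def opval_def list_eq_iff_nth_eq\<close>)

lemma enc_single: "enc [n] [] = bits n"
  by (simp add: enc_def)

lemma enc_snoc: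
  assumes "length ns = Suc (length os)"
  shows "enc (ns @ [m]) (os @ [a]) = enc ns os @ a # bits m"
proof -
  have tail: "map (\<lambda>i. (os @ [a]) ! i # bits ((ns @ [m]) ! Suc i)) [0..<length os] =
      map (\<lambda>i. os ! i # bits (ns ! Suc i)) [0..<length os]"
    using assms by (auto simp: nth_append)
  have ends: "(ns @ [m]) ! 0 = ns ! 0" "(ns @ [m]) ! Suc (length os) = m"
    using assms by (simp_all add: nth_append)
  show ?thesis
    by (simp add: enc_def tail ends)
qed

lemma enc_append_bits:
  assumes "length ns = Suc (length os)"
  shows "enc ns os @ bits u = enc (butlast ns @ [last ns @ u]) os"
proof (cases os rule: rev_cases)
  case Nil
  with assms obtain n where "ns = [n]"
    by (metis length_0_conv length_Suc_conv)
  with Nil show ?thesis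
    by (simp add: enc_single bits_def)
next
  case (snoc os' a)
  with assms obtain ns' n where "ns = ns' @ [n]" "length ns' = Suc (length os')"
    by (metis length_Suc_conv_rev length_append_singleton)
  with snoc show ?thesis
    by (simp add: enc_snoc bits_def)
qed

lemma set_enc: "set (enc ns os) \<subseteq> {Zero, One} \<union> set os"
  by (auto simp: enc_def bits_def)

definition wf_enc :: "nat \<Rightarrow> nat set \<Rightarrow> bool list list \<Rightarrow> sym list \<Rightarrow> bool" where
  "wf_enc l G ns os \<longleftrightarrow>
    length ns = Suc (length os) \<and> (\<forall>n\<in>set ns. length n = l) \<and> set os \<subseteq> Ops G"

lemma wf_enc_last:
  assumes "wf_enc l G ns os"
  shows "last ns = ns ! length os" "length (last ns) = l"
proof -
  have "ns \<noteq> []"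
    using assms by (auto simp: wf_enc_def)
  with assms show "last ns = ns ! length os" "length (last ns) = l"
    by (simp_all add: wf_enc_def last_conv_nth)
qed

definition bit_trace_ok :: "nat \<Rightarrow> bool list list \<Rightarrow> sym list \<Rightarrow> bool" where
  "bit_trace_ok k ns os \<longleftrightarrow> \<not> ns ! 0 ! k \<and>
    (\<forall>i<length os. op_enabled (os ! i) (ns ! i) \<and> ns ! Suc i ! k = next_bit (os ! i) (ns ! i) k)"

lemma bit_trace_ok_snoc:
  assumes "length ns = Suc (length os)"
  shows "bit_trace_ok k (ns @ [m]) (os @ [a]) \<longleftrightarrow>
    bit_trace_ok k ns os \<and> op_enabled a (last ns) \<and> m ! k = next_bit a (last ns) k"
proof -
  have "ns \<noteq> []"
    using assms by auto
  with assms have "last ns = ns ! length os"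
    by (simp add: last_conv_nth)
  with assms show ?thesis
    by (auto simp: bit_trace_ok_def All_less_Suc nth_append)
qed

lemma all_bit_traces_ok_iff:
  assumes "wf_enc l G ns os" "1 \<le> l"
  shows "(\<forall>k<l. bit_trace_ok k ns os \<and> \<not> last ns ! k) \<longleftrightarrow>
    ns ! 0 = replicate l False \<and> ns ! length os = replicate l False \<and>
    (\<forall>i<length os. bval (ns ! Suc i) = opval (os ! i) (bval (ns ! i)) \<and>
       (os ! i = Inc \<longrightarrow> ns ! i \<noteq> replicate l True) \<and>
       (os ! i = Dec \<longrightarrow> ns ! i \<noteq> replicate l False))"
proof -
  have len: "length (ns ! i) = l" if "i \<le> length os" for i
    using assms(1) that by (simp add: wf_enc_def)
  have "(\<forall>k<l. bit_trace_ok k ns os \<and> \<not> last ns ! k) \<longleftrightarrow>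
      (\<forall>k<l. \<not> ns ! 0 ! k) \<and> (\<forall>k<l. \<not> ns ! length os ! k) \<and>
      (\<forall>i<length os. op_enabled (os ! i) (ns ! i) \<and>
         (\<forall>k<l. ns ! Suc i ! k = next_bit (os ! i) (ns ! i) k))"
    using assms(2) unfolding bit_trace_ok_def wf_enc_last[OF assms(1)] by auto
  also have "\<dots> \<longleftrightarrow> ns ! 0 = replicate l False \<and> ns ! length os = replicate l False \<and>
    (\<forall>i<length os. bval (ns ! Suc i) = opval (os ! i) (bval (ns ! i)) \<and>
       (os ! i = Inc \<longrightarrow> ns ! i \<noteq> replicate l True) \<and>
       (os ! i = Dec \<longrightarrow> ns ! i \<noteq> replicate l False))"
    using op_step_iff[OF len len] len by (auto simp: list_eq_iff_nth_eq)
  finally show ?thesis .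
qed

section \<open>The automaton checking one bit\<close>

text \<open>In \<open>Block p e ci cd ao az\<close>, \<open>p\<close> bits of the current number have been read, \<open>e\<close> is the value
  its bit \<open>k\<close> must have, \<open>ci\<close> and \<open>cd\<close> are \<open>carry True\<close> and \<open>carry False\<close> at \<open>k\<close> for the bits
  read so far, and \<open>ao\<close> and \<open>az\<close> say whether all of them are 1 resp. 0.\<close>

datatype state = Sink | Block nat bool bool bool bool bool

fun pos :: "state \<Rightarrow> nat" where
  "pos Sink = 0"
| "pos (Block p _ _ _ _ _) = p"

definition fresh :: "bool \<Rightarrow> state" where
  "fresh e = Block 0 e True True True True"

fun read_bit :: "nat \<Rightarrow> nat \<Rightarrow> state \<Rightarrow> bool \<Rightarrow> state" where
  "read_bit l k Sink x = Sink"
| "read_bit l k (Block p e ci cd ao az) x =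
    (if p < l \<and> (p = k \<longrightarrow> x = e)
     then Block (Suc p) e (if k < p then ci \<and> x else ci) (if k < p then cd \<and> \<not> x else cd)
       (ao \<and> x) (az \<and> \<not> x)
     else Sink)"

fun step :: "nat \<Rightarrow> nat \<Rightarrow> nat set \<Rightarrow> state \<Rightarrow> sym \<Rightarrow> state" where
  "step l k G q Zero = read_bit l k q False"
| "step l k G q One = read_bit l k q True"
| "step l k G (Block p e ci cd ao az) Inc = (if p = l \<and> \<not> ao then fresh (e \<noteq> ci) else Sink)"
| "step l k G (Block p e ci cd ao az) Dec = (if p = l \<and> \<not> az then fresh (e \<noteq> cd) else Sink)"
| "step l k G (Block p e ci cd ao az) (Sym x) = (if p = l \<and> x \<in> G then fresh e else Sink)"
| "step l k G Sink _ = Sink"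

fun accepting :: "nat \<Rightarrow> state \<Rightarrow> bool" where
  "accepting l Sink \<longleftrightarrow> False"
| "accepting l (Block p e _ _ _ _) \<longleftrightarrow> p = l \<and> \<not> e"

definition block_state :: "nat \<Rightarrow> bool \<Rightarrow> bool list \<Rightarrow> state" where
  "block_state k e u =
    Block (length u) e (carry True u k) (carry False u k) (False \<notin> set u) (True \<notin> set u)"

lemma step_Sink [simp]: "step l k G Sink a = Sink"
  by (cases a) simp_all

lemma foldl_step_Sink [simp]: "foldl (step l k G) Sink w = Sink"
  by (induction w) simp_all

lemma foldl_step_bits:
  "length u \<le> l \<Longrightarrow> foldl (step l k G) (fresh e) (bits u) =
    (if k < length u \<and> u ! k \<noteq> e then Sink else block_state k e u)"
proof (induction u rule: rev_induct)
  case Nil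
  then show ?case
    by (simp add: bits_def fresh_def block_state_def carry_def)
next
  case (snoc x u)
  have "step l k G q (if x then One else Zero) = read_bit l k q x" for q
    by (cases x) simp_all
  with snoc show ?case
    by (auto simp: bits_def block_state_def nth_append carry_def)
qed

lemma step_block_state_op:
  assumes "length n = l" "k < l" "a \<in> Ops G"
  shows "step l k G (block_state k (n ! k) n) a =
    (if op_enabled a n then fresh (next_bit a n k) else Sink)"
  using assms by (auto simp: Ops_def block_state_def op_enabled_def next_bit_def)

lemma foldl_step_enc:
  assumes "wf_enc l G ns os" "k < l"
  shows "foldl (step l k G) (fresh False) (enc ns os) =
    (if bit_trace_ok k ns os then block_state k (last ns ! k) (last ns) else Sink)"
  using assms(1)
proof (induction os arbitrary: ns rule: rev_induct)
  case Nil
  then obtain n where "ns = [n]" "length n = l"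
    by (auto simp: wf_enc_def length_Suc_conv)
  with assms(2) show ?case
    by (auto simp: enc_single foldl_step_bits bit_trace_ok_def)
next
  case (snoc a os)
  then obtain ns' m where ns: "ns = ns' @ [m]" "wf_enc l G ns' os" "length m = l" "a \<in> Ops G"
    by (auto simp: wf_enc_def length_Suc_conv_rev)
  with snoc.IH[OF ns(2)] wf_enc_last(2)[OF ns(2)] assms(2) show ?case
    by (simp add: enc_snoc bit_trace_ok_snoc step_block_state_op foldl_step_bits wf_enc_def)
qed

lemma pos_step_le: "pos (step l k G q a) \<le> l"
  by (cases q; cases a) (auto simp: fresh_def)

lemma pos_step_bit:
  "step l k G q a \<noteq> Sink \<Longrightarrow> a \<in> {Zero, One} \<Longrightarrow> pos (step l k G q a) = Suc (pos q)"
  by (cases q; cases a) (auto split: if_splits)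

lemma pos_step_op:
  "step l k G q a \<noteq> Sink \<Longrightarrow> a \<notin> {Zero, One} \<Longrightarrow>
    pos q = l \<and> a \<in> Ops G \<and> pos (step l k G q a) = 0"
  by (cases q; cases a) (auto simp: Ops_def fresh_def split: if_splits)

lemma run_imp_partial_enc:
  assumes "foldl (step l k G) (fresh False) w \<noteq> Sink"
  shows "\<exists>ns os. length ns = Suc (length os) \<and> (\<forall>n\<in>set (butlast ns). length n = l) \<and>
    set os \<subseteq> Ops G \<and> length (last ns) = pos (foldl (step l k G) (fresh False) w) \<and> w = enc ns os"
  using assms
proof (induction w rule: rev_induct)
  case Nil
  show ?case
    by (intro exI[of _ "[[]]"] exI[of _ "[]"]) (simp add: enc_single bits_def fresh_def)
next
  case (snoc x w)
  let ?q = "foldl (step l k G) (fresh False) w"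
  have step: "step l k G ?q x \<noteq> Sink"
    using snoc.prems by simp
  then have "?q \<noteq> Sink"
    by auto
  with snoc.IH obtain ns os where IH: "length ns = Suc (length os)"
    "\<forall>n\<in>set (butlast ns). length n = l" "set os \<subseteq> Ops G" "length (last ns) = pos ?q" "w = enc ns os"
    by blast
  show ?case
  proof (cases "x \<in> {Zero, One}")
    case True
    let ?ns = "butlast ns @ [last ns @ [x = One]]"
    have "length (last ?ns) = pos (foldl (step l k G) (fresh False) (w @ [x]))"
      using IH(4) step True by (simp add: pos_step_bit)
    moreover have "w @ [x] = enc ?ns os"
      using enc_append_bits[of ns os "[x = One]"] True IH(1,5) by (auto simp: bits_def)
    ultimately show ?thesis
      using IH(1-3) by (intro exI[of _ ?ns] exI[of _ os]) simp
  next
    case False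
    with step have x: "pos ?q = l" "x \<in> Ops G" "pos (step l k G ?q x) = 0"
      using pos_step_op by blast+
    have "ns \<noteq> []"
      using IH(1) by auto
    then have "\<forall>n\<in>set ns. length n = l"
      using set_butlast_last[of ns] IH(2,4) x(1) by auto
    with IH x show ?thesis
      by (intro exI[of _ "ns @ [[]]"] exI[of _ "os @ [x]"]) (simp add: enc_snoc bits_def)
  qed
qed

lemma accepting_run_imp_wf_enc:
  assumes "accepting l (foldl (step l k G) (fresh False) w)"
  shows "\<exists>ns os. wf_enc l G ns os \<and> w = enc ns os"
proof -
  have "foldl (step l k G) (fresh False) w \<noteq> Sink" "pos (foldl (step l k G) (fresh False) w) = l"
    using assms by (cases "foldl (step l k G) (fresh False) w"; simp)+
  then obtain ns os where ns: "length ns = Suc (length os)" "\<forall>n\<in>set (butlast ns). length n = l"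
    "set os \<subseteq> Ops G" "length (last ns) = l" "w = enc ns os"
    using run_imp_partial_enc by metis
  have "ns \<noteq> []"
    using ns(1) by auto
  then have "\<forall>n\<in>set ns. length n = l"
    using set_butlast_last[of ns] ns(2,4) by auto
  with ns show ?thesis
    unfolding wf_enc_def by blast
qed

lemma Lprime_eq_accepted:
  assumes "1 \<le> l"
  shows "Lprime l G = {w \<in> lists (Sigma G). \<forall>k<l. accepting l (foldl (step l k G) (fresh False) w)}"
proof -
  have mem: "w \<in> Lprime l G \<longleftrightarrow>
      (\<exists>ns os. wf_enc l G ns os \<and> w = enc ns os \<and> (\<forall>k<l. bit_trace_ok k ns os \<and> \<not> last ns ! k))"
    for w
    using all_bit_traces_ok_iff[OF _ assms] unfolding Lprime_def wf_enc_def Ops_def by blast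
  have acc: "accepting l (foldl (step l k G) (fresh False) (enc ns os)) \<longleftrightarrow>
      bit_trace_ok k ns os \<and> \<not> last ns ! k" if "wf_enc l G ns os" "k < l" for ns os k
    using that wf_enc_last[OF that(1)] by (simp add: foldl_step_enc block_state_def)
  have lists: "enc ns os \<in> lists (Sigma G)" if "wf_enc l G ns os" for ns os
    using that set_enc[of ns os] by (auto simp: wf_enc_def Ops_def Sigma_def Gamma1_def)
  show ?thesis
  proof (intro set_eqI iffI)
    fix w assume "w \<in> Lprime l G"
    then obtain ns os where "wf_enc l G ns os" "w = enc ns os"
      "\<forall>k<l. bit_trace_ok k ns os \<and> \<not> last ns ! k"
      using mem by blast
    then show "w \<in> {w \<in> lists (Sigma G). \<forall>k<l. accepting l (foldl (step l k G) (fresh False) w)}"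
      using acc lists by blast
  next
    fix w assume w: "w \<in> {w \<in> lists (Sigma G). \<forall>k<l. accepting l (foldl (step l k G) (fresh False) w)}"
    then have "accepting l (foldl (step l 0 G) (fresh False) w)"
      using assms by simp
    then obtain ns os where "wf_enc l G ns os" "w = enc ns os"
      using accepting_run_imp_wf_enc by blast
    with w show "w \<in> Lprime l G"
      using mem acc by auto
  qed
qed

instance state :: countable
  by countable_datatype

definition dfa_of :: "'s::countable set \<Rightarrow> 's \<Rightarrow> ('s \<Rightarrow> sym \<Rightarrow> 's) \<Rightarrow> ('s \<Rightarrow> bool) \<Rightarrow> dfa" where
  "dfa_of Q q0 \<delta> F = \<lparr>states = to_nat ` Q, init = to_nat q0,
     trans = (\<lambda>n a. to_nat (\<delta> (from_nat n) a)), final = to_nat ` Collect F\<rparr>"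

lemma run_dfa_of: "run (dfa_of Q q0 \<delta> F) (to_nat q) w = to_nat (foldl \<delta> q w)"
  unfolding run_def by (induction w arbitrary: q) (simp_all add: dfa_of_def)

lemma lang_dfa_of: "lang \<Sigma> (dfa_of Q q0 \<delta> F) = {w \<in> lists \<Sigma>. F (foldl \<delta> q0 w)}"
proof -
  have "init (dfa_of Q q0 \<delta> F) = to_nat q0" "final (dfa_of Q q0 \<delta> F) = to_nat ` Collect F"
    by (simp_all add: dfa_of_def)
  then show ?thesis
    unfolding lang_def by (simp add: run_dfa_of inj_image_mem_iff)
qed

lemma is_dfa_dfa_of:
  assumes "finite Q" "q0 \<in> Q" "Collect F \<subseteq> Q" "\<And>q a. q \<in> Q \<Longrightarrow> a \<in> \<Sigma> \<Longrightarrow> \<delta> q a \<in> Q"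
  shows "is_dfa \<Sigma> (dfa_of Q q0 \<delta> F)"
  using assms by (auto simp: is_dfa_def dfa_of_def)

lemma card_states_dfa_of: "card (states (dfa_of Q q0 \<delta> F)) = card Q"
  by (simp add: dfa_of_def card_image inj_on_subset[OF inj_to_nat])

definition states_upto :: "nat \<Rightarrow> state set" where
  "states_upto l = {q. pos q \<le> l}"

lemma states_upto_subset:
  "states_upto l \<subseteq> insert Sink ((\<lambda>(p, e, ci, cd, ao, az). Block p e ci cd ao az) ` ({..l} \<times> UNIV))"
proof
  fix q assume "q \<in> states_upto l"
  then show "q \<in> insert Sink ((\<lambda>(p, e, ci, cd, ao, az). Block p e ci cd ao az) ` ({..l} \<times> UNIV))"
    by (cases q) (auto simp: states_upto_def image_iff)
qed

lemma finite_states_upto: "finite (states_upto l)"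
  by (rule finite_subset[OF states_upto_subset]) simp

lemma card_states_upto: "card (states_upto l) \<le> 32 * l + 33"
proof -
  let ?T = "{..l} \<times> (UNIV :: (bool \<times> bool \<times> bool \<times> bool \<times> bool) set)"
  let ?f = "\<lambda>(p, e, ci, cd, ao, az). Block p e ci cd ao az"
  have "card (states_upto l) \<le> card (insert Sink (?f ` ?T))"
    by (rule card_mono[OF _ states_upto_subset]) simp
  also have "\<dots> \<le> Suc (card (?f ` ?T))"
    by (simp add: card_insert_if)
  also have "\<dots> \<le> Suc (card ?T)"
    using card_image_le[of ?T ?f] by simp
  also have "\<dots> = 32 * l + 33"
    by (simp add: card_cartesian_product flip: UNIV_Times_UNIV)
  finally show ?thesis .
qed

definition counter_dfa :: "nat \<Rightarrow> nat \<Rightarrow> nat set \<Rightarrow> dfa" where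
  "counter_dfa l k G = dfa_of (states_upto l) (fresh False) (step l k G) (accepting l)"

lemma is_dfa_counter_dfa: "is_dfa (Sigma G) (counter_dfa l k G)"
proof -
  have "fresh False \<in> states_upto l"
    by (simp add: states_upto_def fresh_def)
  moreover have "Collect (accepting l) \<subseteq> states_upto l"
  proof
    fix q assume "q \<in> Collect (accepting l)"
    then show "q \<in> states_upto l"
      by (cases q) (simp_all add: states_upto_def)
  qed
  moreover have "step l k G q a \<in> states_upto l" for q a
    by (simp add: states_upto_def pos_step_le)
  ultimately show ?thesis
    unfolding counter_dfa_def by (simp add: is_dfa_dfa_of finite_states_upto)
qed

lemma card_states_counter_dfa: "card (states (counter_dfa l k G)) \<le> 32 * l + 33"
  unfolding counter_dfa_def card_states_dfa_of by (rule card_states_upto)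

lemma Lprime_eq_Inter_counter_dfa:
  assumes "1 \<le> l"
  shows "Lprime l G = (\<Inter>k<l. lang (Sigma G) (counter_dfa l k G))"
proof (rule set_eqI)
  fix w
  have "0 < l"
    using assms by simp
  then show "w \<in> Lprime l G \<longleftrightarrow> w \<in> (\<Inter>k<l. lang (Sigma G) (counter_dfa l k G))"
    by (simp add: Lprime_eq_accepted[OF assms] counter_dfa_def lang_dfa_of) blast
qed

theorem claim4p8:
  shows "\<exists>c::nat. \<forall>l::nat. \<forall>G2::nat set. l \<ge> 1 \<longrightarrow> finite G2 \<longrightarrow>
    (\<exists>A :: nat \<Rightarrow> dfa.
       (\<forall>i\<in>{1..l}. is_dfa (Sigma G2) (A i) \<and> card (states (A i)) \<le> c * l) \<and>
       Lprime l G2 = (\<Inter>i\<in>{1..l}. lang (Sigma G2) (A i)))"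
proof (intro exI[of _ 65] allI impI)
  fix l :: nat and G :: "nat set"
  assume "1 \<le> l"
  let ?A = "\<lambda>i. counter_dfa l (i - 1) G"
  show "\<exists>A. (\<forall>i\<in>{1..l}. is_dfa (Sigma G) (A i) \<and> card (states (A i)) \<le> 65 * l) \<and>
      Lprime l G = (\<Inter>i\<in>{1..l}. lang (Sigma G) (A i))"
  proof (intro exI[of _ ?A] conjI ballI)
    fix i
    show "is_dfa (Sigma G) (?A i)"
      by (rule is_dfa_counter_dfa)
    have "32 * l + 33 \<le> 65 * l"
      using \<open>1 \<le> l\<close> by linarith
    then show "card (states (?A i)) \<le> 65 * l"
      using card_states_counter_dfa order_trans by blast
  next
    have "{1..l} = Suc ` {..<l}"
      by (simp add: image_Suc_lessThan)
    then show "Lprime l G = (\<Inter>i\<in>{1..l}. lang (Sigma G) (?A i))"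
      using Lprime_eq_Inter_counter_dfa[OF \<open>1 \<le> l\<close>] by simp
  qed
qed

end
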